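(* Let $\psi$ be a colouring. 1. The equation $\psi\ltimes\xi=\psi[+1]$ has a regular summable solution $\xi\in\mathcal C_0$ if and only if $\psi$, viewed as an element of $\mathcal C_1$, is regular. 2. Suppose that $\psi$ is regular, and let $d\ge0$. Then $\xi\mapsto\psi\ltimes\xi$ is a $\mathbb k[[h]]$-linear bijection from the set of regular summable sequences in $\mathcal C_d$ onto the set of regular sequences of Verma type in $\mathcal C_d$.
   Context: $\mathbb k$ is a field of characteristic zero, and $\mathbb k[[h]]$ is the ring of formal power series over $\mathbb k$. A colouring is a sequence $\psi=(\psi^k)_{k\ge1}$ of functions $\psi^k:\mathbb Z\to\mathbb k[[h]]$ satisfying: - (C1) $\psi^k(n)\equiv k(n-k+1)\bmod h$; - (C2) $\psi^{n+1}(n)=0$ for all $n\ge0$; - (C3) $\psi^{n+k+1}(n)=\psi^k(-n-2)$ for all $k\ge1$ and all $n\ge0$. Sequences. For $d\in\mathbb N$, $\mathcal C_d$ is the $\mathbb k[[h]]$-module of sequences $f=(f^k)_{k\ge d}$ of functions $f^k:\mathbb Z\to\mathbb k[[h]]$. We write $f^k(n)=\sum_{m\ge0}f^k_m(n)h^m$ with $f^k_m:\mathbb Z\to\mathbb k$. - $f$ is summable if for each $m$ one has $f^k_m\equiv0$ for all sufficiently large $k$. - $f$ is regular if each $f^k_m$ is a polynomial function of $n$, and for each $m$ the degree of $f^k_m$ is bounded independently of $k$. - $f$ is of Verma type if $f^k(n)=0$ for all $k\ge d$ and $n\ge0$ with $n+1\le k\le n+d$, and $f^{n+k+1}(n)=f^k(-n-2)$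 for all $k\ge d$ and $n\ge0$. A colouring is an element of $\mathcal C_1$. Define $\psi[+1]\in\mathcal C_0$ by $(\psi[+1])^k=\psi^{k+1}$ for $k\ge0$. For $\xi\in\mathcal C_d$, define $\psi\ltimes\xi\in\mathcal C_d$ by $$(\psi\ltimes\xi)^k(n)=\sum_{a=d}^k\Big(\prod_{b=k-a+1}^k\psi^b(n)\Big)\xi^a(n-2k)\qquad(k\ge d),$$ where the empty product is $1$. *)

theory Defs
  imports "HOL-Computational_Algebra.Formal_Power_Series" "HOL-Computational_Algebra.Polynomial"
begin

text \<open>A sequence f = (f^k)_{k >= d} of functions Z -> k[[h]] is represented as a function
  nat => int => 'a fps whose entries with index k < d are zero (canonical representative).\<close>

type_synonym 'a seq = "nat \<Rightarrow> int \<Rightarrow> 'a fps"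

definition Cseq :: "nat \<Rightarrow> 'a::field_char_0 seq set" where
  "Cseq d = {f. \<forall>k<d. f k = (\<lambda>n. 0)}"

definition colouring :: "'a::field_char_0 seq \<Rightarrow> bool" where
  "colouring \<psi> \<longleftrightarrow> \<psi> \<in> Cseq 1
     \<and> (\<forall>k\<ge>1. \<forall>n. fps_nth (\<psi> k n) 0 = of_int (int k * (n - int k + 1)))
     \<and> (\<forall>n::nat. \<psi> (n + 1) (int n) = 0)
     \<and> (\<forall>k\<ge>1. \<forall>n::nat. \<psi> (n + k + 1) (int n) = \<psi> k (- int n - 2))"

definition summable_seq :: "nat \<Rightarrow> 'a::field_char_0 seq \<Rightarrow> bool" where
  "summable_seq d f \<longleftrightarrow> (\<forall>m. \<exists>K. \<forall>k\<ge>max d K. \<forall>n. fps_nth (f k n) m = 0)"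

definition regular_seq :: "nat \<Rightarrow> 'a::field_char_0 seq \<Rightarrow> bool" where
  "regular_seq d f \<longleftrightarrow> (\<forall>m. \<exists>D. \<forall>k\<ge>d. \<exists>p :: 'a poly.
      degree p \<le> D \<and> (\<forall>n. fps_nth (f k n) m = poly p (of_int n)))"

definition verma_type :: "nat \<Rightarrow> 'a::field_char_0 seq \<Rightarrow> bool" where
  "verma_type d f \<longleftrightarrow>
     (\<forall>k\<ge>d. \<forall>n::nat. n + 1 \<le> k \<and> k \<le> n + d \<longrightarrow> f k (int n) = 0)
   \<and> (\<forall>k\<ge>d. \<forall>n::nat. f (n + k + 1) (int n) = f k (- int n - 2))"

definition shift1 :: "'a::field_char_0 seq \<Rightarrow> 'a seq" where
  "shift1 \<psi> = (\<lambda>k. \<psi> (k + 1))"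

definition ltimes :: "nat \<Rightarrow> 'a::field_char_0 seq \<Rightarrow> 'a seq \<Rightarrow> 'a seq" where
  "ltimes d \<psi> \<xi> = (\<lambda>k n. if k < d then 0 else
      (\<Sum>a=d..k. (\<Prod>b=k-a+1..k. \<psi> b n) * \<xi> a (n - 2 * int k)))"

end

theory Submission
  imports Defs
begin

text \<open>
  Modulo \<open>h\<close> every colouring is \<open>\<psi>\<^sub>0\<^sup>b(n) = b (n - b + 1)\<close>.  The operator is triangular:
  at level \<open>k\<close> and \<open>n \<ge> k\<close>, \<open>\<xi>\<^sup>k(n - 2k)\<close> enters \<open>(\<psi> \<ltimes> \<xi>)\<^sup>k(n)\<close> with the coefficient
  \<open>\<psi>\<^sup>1(n) \<cdots> \<psi>\<^sup>k(n) \<noteq> 0\<close>; as a polynomial is determined by its values on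
  a half-line, \<open>\<xi> \<mapsto> \<psi> \<ltimes> \<xi>\<close> is injective on regular sequences.  A regular Verma-type
  \<open>\<eta>\<close> is solved modulo \<open>h\<close> level by level: the Verma conditions make the lowest level
  \<open>\<eta>\<^sup>d\<close> vanish at \<open>0, \<dots>, d - 1\<close>, hence divisible by \<open>\<psi>\<^sub>0\<^sup>1 \<cdots> \<psi>\<^sub>0\<^sup>d\<close>; after subtracting,
  the remainder is of Verma type at level \<open>d + 1\<close>, and the process stops when \<open>d\<close> exceeds
  the degree.  Subtracting the classical solution and dividing by \<open>h\<close> again gives a regular
  Verma-type sequence, so solving order by order yields an \<open>h\<close>-adic solution.  Conversely,
  a solution of \<open>\<psi> \<ltimes> \<xi> = \<psi>[+1]\<close> is \<open>(n, 1, 0, 0, \<dots>)\<close> modulo \<open>h\<close>, and comparing the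
  coefficients of order \<open>m + 1\<close> bounds \<open>\<psi>\<^bsup>k+1\<^esub> - \<psi>\<^sup>k\<close> by lower orders and finitely many
  \<open>\<xi>\<^sup>a\<close>, uniformly in \<open>k\<close>.
\<close>

unbundle fps_syntax

section \<open>Polynomial functions on the integers\<close>

definition poly_fun :: "nat \<Rightarrow> (int \<Rightarrow> 'a::comm_ring_1) \<Rightarrow> bool" where
  "poly_fun D f \<longleftrightarrow> (\<exists>p :: 'a poly. degree p \<le> D \<and> (\<forall>n. f n = poly p (of_int n)))"

lemma poly_fun_mono: "poly_fun D f \<Longrightarrow> D \<le> E \<Longrightarrow> poly_fun E f"
  unfolding poly_fun_def by (meson order_trans)

lemma poly_fun_const: "poly_fun D (\<lambda>n. c)"
  unfolding poly_fun_def by (intro exI[of _ "[:c:]"]) simp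

lemma poly_fun_of_int: "poly_fun 1 of_int"
  unfolding poly_fun_def by (intro exI[of _ "[:0, 1:]"]) simp

lemma poly_fun_add: "poly_fun D f \<Longrightarrow> poly_fun D g \<Longrightarrow> poly_fun D (\<lambda>n. f n + g n)"
  unfolding poly_fun_def by (metis degree_add_le poly_add)

lemma poly_fun_diff: "poly_fun D f \<Longrightarrow> poly_fun D g \<Longrightarrow> poly_fun D (\<lambda>n. f n - g n)"
  unfolding poly_fun_def by (metis degree_diff_le poly_diff)

lemma poly_fun_mult: "poly_fun D f \<Longrightarrow> poly_fun E g \<Longrightarrow> poly_fun (D + E) (\<lambda>n. f n * g n)"
  unfolding poly_fun_def by (metis add_mono degree_mult_le order_trans poly_mult)

lemma poly_fun_shift:
  assumes "poly_fun D f"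
  shows "poly_fun D (\<lambda>n. f (n + c))"
proof -
  obtain p where "degree p \<le> D" "\<And>n. f n = poly p (of_int n)"
    using assms unfolding poly_fun_def by auto
  then show ?thesis
    unfolding poly_fun_def
    by (intro exI[of _ "pcompose p [:of_int c, 1:]"])
      (auto simp: poly_pcompose add.commute intro: order_trans[OF degree_pcompose_le])
qed

lemma poly_fun_sum:
  "finite S \<Longrightarrow> (\<And>a. a \<in> S \<Longrightarrow> poly_fun D (f a)) \<Longrightarrow> poly_fun D (\<lambda>n. \<Sum>a\<in>S. f a n)"
  by (induction S rule: finite_induct) (auto intro: poly_fun_add poly_fun_const)

lemma poly_fun_prod:
  "finite S \<Longrightarrow> (\<And>a. a \<in> S \<Longrightarrow> poly_fun D (f a)) \<Longrightarrow> poly_fun (card S * D) (\<lambda>n. \<Prod>a\<in>S. f a n)"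
  by (induction S rule: finite_induct) (auto intro: poly_fun_mult poly_fun_const)

lemma poly_fun_eq_0_if_card_zeros:
  fixes f :: "int \<Rightarrow> 'a::{idom,ring_char_0}"
  assumes "poly_fun D f" "finite A" "card A > D" "\<And>n. n \<in> A \<Longrightarrow> f n = 0"
  shows "f n = 0"
proof -
  obtain p where p: "\<And>n. f n = poly p (of_int n)" and "degree p \<le> D"
    using assms(1) unfolding poly_fun_def by auto
  have "p = 0"
  proof (rule ccontr)
    assume "p \<noteq> 0"
    have "card A = card (of_int ` A :: 'a set)"
      by (simp add: card_image inj_on_def)
    also have "\<dots> \<le> card {x. poly p x = 0}"
      using assms(4) p poly_roots_finite[OF \<open>p \<noteq> 0\<close>] by (intro card_mono) auto
    also have "\<dots> \<le> degree p"
      using \<open>p \<noteq> 0\<close> by (rule card_poly_roots_bound)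
    finally show False using assms(3) \<open>degree p \<le> D\<close> by simp
  qed
  then show ?thesis using p by simp
qed

lemma poly_fun_eq_0_if_eventually_0:
  fixes f :: "int \<Rightarrow> 'a::{idom,ring_char_0}"
  assumes "poly_fun D f" "\<And>n. n \<ge> c \<Longrightarrow> f n = 0"
  shows "f n = 0"
proof (rule poly_fun_eq_0_if_card_zeros[OF assms(1)])
  show "card {c..c + int D} > D"
    by simp
qed (use assms(2) in auto)

lemma poly_fun_factor_zero:
  fixes f :: "int \<Rightarrow> 'a::idom"
  assumes "poly_fun D f" "f c = 0"
  obtains g where "poly_fun (D - 1) g" "\<And>n. f n = (of_int n - of_int c) * g n"
proof -
  obtain p where p: "\<And>n. f n = poly p (of_int n)" and "degree p \<le> D"
    using assms(1) unfolding poly_fun_def by auto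
  then obtain r where r: "p = [:- of_int c, 1:] * r"
    using assms(2) poly_eq_0_iff_dvd by (metis dvdE)
  have "degree r \<le> D - 1"
  proof (cases "r = 0")
    case False
    then have "degree p = 1 + degree r"
      unfolding r by (subst degree_mult_eq) auto
    then show ?thesis using \<open>degree p \<le> D\<close> by simp
  qed simp
  then show ?thesis
    using p r by (intro that[of "\<lambda>n. poly r (of_int n)"]) (auto simp: poly_fun_def algebra_simps)
qed

lemma poly_fun_factor_zeros_below:
  fixes f :: "int \<Rightarrow> 'a::{idom,ring_char_0}"
  assumes "poly_fun D f" "\<And>j::nat. j < d \<Longrightarrow> f (int j) = 0"
  obtains g where "poly_fun (D - d) g" "\<And>n. f n = (\<Prod>j<d. of_int n - of_int (int j)) * g n"
  using assms(2)
proof (induction d arbitrary: thesis)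
  case 0
  then show ?case using assms(1) by simp
next
  case (Suc d)
  then obtain g where g: "poly_fun (D - d) g" "\<And>n. f n = (\<Prod>j<d. of_int n - of_int (int j)) * g n"
    by auto
  have "(\<Prod>j<d. of_int (int d) - of_int (int j) :: 'a) \<noteq> 0"
    by (simp flip: of_int_diff)
  then have "g (int d) = 0"
    using g(2)[of "int d"] Suc.prems(2)[of d] by simp
  then obtain g' where g': "poly_fun (D - d - 1) g'" "\<And>n. g n = (of_int n - of_int (int d)) * g' n"
    using poly_fun_factor_zero[OF g(1)] by blast
  have "poly_fun (D - Suc d) g'"
    using g'(1) by simp
  moreover have "f n = (\<Prod>j<Suc d. of_int n - of_int (int j)) * g' n" for n
    by (simp add: g(2) g'(2) algebra_simps)
  ultimately show ?case
    by (rule Suc.prems(1))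
qed

section \<open>Coefficientwise polynomial sequences\<close>

definition fps_poly_fun :: "nat \<Rightarrow> nat \<Rightarrow> (int \<Rightarrow> 'a::comm_ring_1 fps) \<Rightarrow> bool" where
  "fps_poly_fun m D f \<longleftrightarrow> (\<forall>j\<le>m. poly_fun D (\<lambda>n. f n $ j))"

lemma fps_poly_fun_mono: "fps_poly_fun m D f \<Longrightarrow> D \<le> E \<Longrightarrow> fps_poly_fun m E f"
  unfolding fps_poly_fun_def using poly_fun_mono by blast

lemma fps_poly_fun_shift: "fps_poly_fun m D f \<Longrightarrow> fps_poly_fun m D (\<lambda>n. f (n + c))"
  unfolding fps_poly_fun_def using poly_fun_shift by blast

lemma fps_poly_fun_mult:
  assumes "fps_poly_fun m D f" "fps_poly_fun m E g"
  shows "fps_poly_fun m (D + E) (\<lambda>n. f n * g n)"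
  unfolding fps_poly_fun_def fps_mult_nth
proof (intro allI impI)
  fix j assume "j \<le> m"
  then show "poly_fun (D + E) (\<lambda>n. \<Sum>i=0..j. f n $ i * g n $ (j - i))"
    using assms unfolding fps_poly_fun_def by (intro poly_fun_sum poly_fun_mult) auto
qed

lemma fps_poly_fun_prod:
  "finite S \<Longrightarrow> (\<And>b. b \<in> S \<Longrightarrow> fps_poly_fun m D (F b))
    \<Longrightarrow> fps_poly_fun m (card S * D) (\<lambda>n. \<Prod>b\<in>S. F b n)"
proof (induction S rule: finite_induct)
  case empty
  then show ?case by (simp add: fps_poly_fun_def poly_fun_const)
next
  case (insert b S)
  then show ?case by (simp add: fps_poly_fun_mult)
qed

lemma poly_fun_mult_nth_Suc:
  assumes "fps_poly_fun m D f" "fps_poly_fun (Suc m) E g"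
  shows "poly_fun (D + E) (\<lambda>n. (f n * g n) $ Suc m - f n $ Suc m * g n $ 0)"
proof -
  have "(f n * g n) $ Suc m - f n $ Suc m * g n $ 0 = (\<Sum>i=0..m. f n $ i * g n $ (Suc m - i))" for n
    by (simp add: fps_mult_nth sum.atLeast0_atMost_Suc)
  moreover have "poly_fun (D + E) (\<lambda>n. \<Sum>i=0..m. f n $ i * g n $ (Suc m - i))"
    using assms unfolding fps_poly_fun_def by (intro poly_fun_sum poly_fun_mult) auto
  ultimately show ?thesis by simp
qed

lemma regular_seq_iff_poly_fun:
  "regular_seq d f \<longleftrightarrow> (\<forall>m. \<exists>D. \<forall>k\<ge>d. poly_fun D (\<lambda>n. f k n $ m))"
  by (simp add: regular_seq_def poly_fun_def)

lemma fps_poly_fun_Suc: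
  assumes "fps_poly_fun m D f" "poly_fun E (\<lambda>n. f n $ Suc m)"
  shows "fps_poly_fun (Suc m) (max D E) f"
  unfolding fps_poly_fun_def
proof (intro allI impI)
  fix j assume "j \<le> Suc m"
  then consider "j \<le> m" | "j = Suc m" by linarith
  then have "poly_fun D (\<lambda>n. f n $ j) \<or> poly_fun E (\<lambda>n. f n $ j)"
    by cases (use assms in \<open>auto simp: fps_poly_fun_def\<close>)
  then show "poly_fun (max D E) (\<lambda>n. f n $ j)"
    by (auto elim: poly_fun_mono)
qed

lemma regular_seq_iff_fps_poly_fun:
  "regular_seq d f \<longleftrightarrow> (\<forall>m. \<exists>D. \<forall>k\<ge>d. fps_poly_fun m D (f k))"
proof
  assume "regular_seq d f"
  then have coeff: "\<exists>D. \<forall>k\<ge>d. poly_fun D (\<lambda>n. f k n $ m)" for m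
    unfolding regular_seq_iff_poly_fun by blast
  show "\<forall>m. \<exists>D. \<forall>k\<ge>d. fps_poly_fun m D (f k)"
  proof
    fix m show "\<exists>D. \<forall>k\<ge>d. fps_poly_fun m D (f k)"
    proof (induction m)
      case 0
      then show ?case using coeff[of 0] by (simp add: fps_poly_fun_def)
    next
      case (Suc m)
      then obtain D where "\<forall>k\<ge>d. fps_poly_fun m D (f k)" by blast
      moreover obtain E where "\<forall>k\<ge>d. poly_fun E (\<lambda>n. f k n $ Suc m)" using coeff by blast
      ultimately have "\<forall>k\<ge>d. fps_poly_fun (Suc m) (max D E) (f k)"
        by (simp add: fps_poly_fun_Suc)
      then show ?case by blast
    qed
  qed
next
  assume uniform: "\<forall>m. \<exists>D. \<forall>k\<ge>d. fps_poly_fun m D (f k)"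
  show "regular_seq d f"
    unfolding regular_seq_iff_poly_fun
  proof
    fix m
    obtain D where "\<forall>k\<ge>d. fps_poly_fun m D (f k)" using uniform by blast
    then have "\<forall>k\<ge>d. poly_fun D (\<lambda>n. f k n $ m)" by (simp add: fps_poly_fun_def)
    then show "\<exists>D. \<forall>k\<ge>d. poly_fun D (\<lambda>n. f k n $ m)" by blast
  qed
qed

lemma summable_seq_uniform:
  assumes "summable_seq d f"
  obtains K where "\<And>k n j. k \<ge> K \<Longrightarrow> j \<le> m \<Longrightarrow> f k n $ j = 0"
proof -
  have "\<exists>K. \<forall>k\<ge>K. \<forall>n. \<forall>j\<le>m. f k n $ j = 0"
  proof (induction m)
    case 0
    then show ?case using assms unfolding summable_seq_def by (metis le_zero_eq max.bounded_iff)
  next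
    case (Suc m)
    then obtain K where "\<forall>k\<ge>K. \<forall>n. \<forall>j\<le>m. f k n $ j = 0" by blast
    moreover obtain K' where "\<forall>k\<ge>max d K'. \<forall>n. f k n $ Suc m = 0"
      using assms unfolding summable_seq_def by blast
    ultimately show ?case
      by (intro exI[of _ "max K (max d K')"]) (auto simp: le_Suc_eq)
  qed
  then show ?thesis using that by blast
qed

lemma regular_seq_diff:
  assumes "regular_seq d f" "regular_seq d g"
  shows "regular_seq d (\<lambda>k n. f k n - g k n)"
  unfolding regular_seq_iff_poly_fun
proof
  fix m
  obtain D E where D: "\<forall>k\<ge>d. poly_fun D (\<lambda>n. f k n $ m)" and E: "\<forall>k\<ge>d. poly_fun E (\<lambda>n. g k n $ m)"
    using assms unfolding regular_seq_iff_poly_fun by meson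
  have "poly_fun (max D E) (\<lambda>n. (f k n - g k n) $ m)" if "k \<ge> d" for k
  proof -
    have "poly_fun (max D E) (\<lambda>n. f k n $ m)"
      using poly_fun_mono[of D "\<lambda>n. f k n $ m" "max D E"] D that by simp
    moreover have "poly_fun (max D E) (\<lambda>n. g k n $ m)"
      using poly_fun_mono[of E "\<lambda>n. g k n $ m" "max D E"] E that by simp
    ultimately show ?thesis by (simp add: poly_fun_diff)
  qed
  then show "\<exists>D. \<forall>k\<ge>d. poly_fun D (\<lambda>n. (f k n - g k n) $ m)" by blast
qed

lemma regular_seq_fps_shift: "regular_seq d f \<Longrightarrow> regular_seq d (\<lambda>k n. fps_shift 1 (f k n))"
  unfolding regular_seq_iff_poly_fun fps_shift_nth by blast

section \<open>The operator \<open>\<ltimes>\<close> over an arbitrary ring\<close>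

text \<open>The formula of \<open>ltimes\<close> for sequences in any commutative ring, so that it
  also covers the classical equation modulo \<open>h\<close>.\<close>
definition ltimes_gen ::
    "nat \<Rightarrow> (nat \<Rightarrow> int \<Rightarrow> 'b::comm_ring_1) \<Rightarrow> (nat \<Rightarrow> int \<Rightarrow> 'b) \<Rightarrow> nat \<Rightarrow> int \<Rightarrow> 'b" where
  "ltimes_gen d \<psi> \<xi> = (\<lambda>k n. if k < d then 0 else
      (\<Sum>a=d..k. (\<Prod>b=k-a+1..k. \<psi> b n) * \<xi> a (n - 2 * int k)))"

lemma ltimes_eq_ltimes_gen: "ltimes d \<psi> \<xi> = ltimes_gen d \<psi> \<xi>"
  by (simp add: ltimes_def ltimes_gen_def)

definition colouring_relations :: "(nat \<Rightarrow> int \<Rightarrow> 'b::zero) \<Rightarrow> bool" where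
  "colouring_relations \<psi> \<longleftrightarrow> (\<forall>n::nat. \<psi> (n + 1) (int n) = 0)
     \<and> (\<forall>k\<ge>1. \<forall>n::nat. \<psi> (n + k + 1) (int n) = \<psi> k (- int n - 2))"

definition verma :: "nat \<Rightarrow> (nat \<Rightarrow> int \<Rightarrow> 'b::zero) \<Rightarrow> bool" where
  "verma d f \<longleftrightarrow>
     (\<forall>k\<ge>d. \<forall>n::nat. n + 1 \<le> k \<and> k \<le> n + d \<longrightarrow> f k (int n) = 0)
   \<and> (\<forall>k\<ge>d. \<forall>n::nat. f (n + k + 1) (int n) = f k (- int n - 2))"

lemma verma_type_iff_verma: "verma_type d f \<longleftrightarrow> verma d f"
  by (simp add: verma_type_def verma_def)

lemma colouring_relations_if_colouring: "colouring \<psi> \<Longrightarrow> colouring_relations \<psi>"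
  by (simp add: colouring_def colouring_relations_def)

lemma verma_diff:
  fixes f g :: "nat \<Rightarrow> int \<Rightarrow> 'b::ab_group_add"
  shows "verma d f \<Longrightarrow> verma d g \<Longrightarrow> verma d (\<lambda>k n. f k n - g k n)"
  by (simp add: verma_def)

lemma verma_map: "F 0 = 0 \<Longrightarrow> verma d f \<Longrightarrow> verma d (\<lambda>k n. F (f k n))"
  by (simp add: verma_def)

lemma verma_Suc:
  assumes "verma d f" "f d = (\<lambda>n. 0)"
  shows "verma (Suc d) f"
  unfolding verma_def
proof (intro conjI allI impI)
  fix k n assume k: "k \<ge> Suc d" and between: "n + 1 \<le> k \<and> k \<le> n + Suc d"
  show "f k (int n) = 0"
  proof (cases "k \<le> n + d")
    case True
    then show ?thesis using assms(1) k between by (simp add: verma_def)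
  next
    case False
    then have "k = n + d + 1" using between by simp
    then show ?thesis using assms by (simp add: verma_def)
  qed
next
  fix k n assume "k \<ge> Suc d"
  then show "f (n + k + 1) (int n) = f k (- int n - 2)"
    using assms(1) by (simp add: verma_def)
qed

lemma ltimes_gen_eq_0_if_between:
  assumes "colouring_relations \<psi>" "n + 1 \<le> k" "k \<le> n + d"
  shows "ltimes_gen d \<psi> \<xi> k (int n) = 0"
proof -
  have "(\<Prod>b=k-a+1..k. \<psi> b (int n)) = 0" if "a \<in> {d..k}" for a
    using that assms by (intro prod_zero) (auto simp: colouring_relations_def intro!: bexI[of _ "n + 1"])
  then show ?thesis unfolding ltimes_gen_def by simp
qed

text \<open>Only the terms with \<open>a \<le> k\<close> survive at level \<open>n + k + 1\<close>: in the others the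
  product runs over \<open>b = n + 1\<close>, where \<open>\<psi> b n = 0\<close>.  The surviving products are shifted
  copies of those at level \<open>k\<close>.\<close>
lemma ltimes_gen_reflect:
  assumes rel: "colouring_relations \<psi>" and "k \<ge> d"
  shows "ltimes_gen d \<psi> \<xi> (n + k + 1) (int n) = ltimes_gen d \<psi> \<xi> k (- int n - 2)"
proof -
  let ?t = "\<lambda>a. (\<Prod>b=n+k+1-a+1..n+k+1. \<psi> b (int n)) * \<xi> a (int n - 2 * int (n + k + 1))"
  have C2: "\<psi> (n + 1) (int n) = 0" and C3: "\<And>b. b \<ge> 1 \<Longrightarrow> \<psi> (b + (n + 1)) (int n) = \<psi> b (- int n - 2)"
    using rel by (auto simp: colouring_relations_def add.commute add.left_commute)
  have vanish: "?t a = 0" if "a \<in> {k+1..k+(n+1)}" for a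
    using that C2 by (subst prod_zero) (auto intro!: bexI[of _ "n + 1"])
  have shift: "?t a = (\<Prod>b=k-a+1..k. \<psi> b (- int n - 2)) * \<xi> a (- int n - 2 - 2 * int k)"
    if "a \<in> {d..k}" for a
  proof -
    have "{n+k+1-a+1..n+k+1} = {(k-a+1)+(n+1)..k+(n+1)}"
      using that by auto
    then have "(\<Prod>b=n+k+1-a+1..n+k+1. \<psi> b (int n)) = (\<Prod>b=k-a+1..k. \<psi> (b + (n + 1)) (int n))"
      by (simp only: prod.shift_bounds_cl_nat_ivl)
    also have "\<dots> = (\<Prod>b=k-a+1..k. \<psi> b (- int n - 2))"
      using C3 by (intro prod.cong) auto
    finally show ?thesis by (simp add: algebra_simps)
  qed
  have "ltimes_gen d \<psi> \<xi> (n + k + 1) (int n) = (\<Sum>a=d..k+(n+1). ?t a)"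
    using assms(2) by (simp add: ltimes_gen_def add.commute add.left_commute)
  also have "\<dots> = (\<Sum>a=d..k. ?t a) + (\<Sum>a=k+1..k+(n+1). ?t a)"
    using assms(2) by (intro sum.ub_add_nat) simp
  also have "\<dots> = (\<Sum>a=d..k. ?t a)"
    using vanish by simp
  also have "\<dots> = ltimes_gen d \<psi> \<xi> k (- int n - 2)"
    using assms(2) shift by (simp add: ltimes_gen_def)
  finally show ?thesis .
qed

lemma verma_ltimes_gen: "colouring_relations \<psi> \<Longrightarrow> verma d (ltimes_gen d \<psi> \<xi>)"
  unfolding verma_def using ltimes_gen_eq_0_if_between ltimes_gen_reflect by blast

lemma ltimes_gen_linear:
  "ltimes_gen d \<psi> (\<lambda>k n. c * \<xi>1 k n + \<xi>2 k n)
    = (\<lambda>k n. c * ltimes_gen d \<psi> \<xi>1 k n + ltimes_gen d \<psi> \<xi>2 k n)"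
  unfolding ltimes_gen_def by (auto simp: sum_distrib_left sum.distrib algebra_simps intro!: ext)

lemma ltimes_gen_add:
  "ltimes_gen d \<psi> (\<lambda>k n. \<xi>1 k n + \<xi>2 k n) = (\<lambda>k n. ltimes_gen d \<psi> \<xi>1 k n + ltimes_gen d \<psi> \<xi>2 k n)"
  using ltimes_gen_linear[of d \<psi> 1] by simp

lemma ltimes_gen_diff:
  "ltimes_gen d \<psi> (\<lambda>k n. \<xi>1 k n - \<xi>2 k n) = (\<lambda>k n. ltimes_gen d \<psi> \<xi>1 k n - ltimes_gen d \<psi> \<xi>2 k n)"
  using ltimes_gen_linear[of d \<psi> "-1" \<xi>2 \<xi>1] by simp

lemma ltimes_gen_Suc:
  assumes "\<xi> d = (\<lambda>n. 0)"
  shows "ltimes_gen d \<psi> \<xi> = ltimes_gen (Suc d) \<psi> \<xi>"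
proof (intro ext)
  fix k n
  show "ltimes_gen d \<psi> \<xi> k n = ltimes_gen (Suc d) \<psi> \<xi> k n"
  proof (cases "k \<ge> Suc d")
    case True
    then have "{d..k} = insert d {Suc d..k}" by auto
    then show ?thesis using True assms unfolding ltimes_gen_def by simp
  next
    case False
    then show ?thesis using assms unfolding ltimes_gen_def by (cases "k = d") auto
  qed
qed

lemma ltimes_gen_extend_solution:
  assumes "\<xi>' d = (\<lambda>n. 0)" "ltimes_gen d \<psi> \<delta> d = \<eta> d"
    and "\<And>k. k \<ge> Suc d \<Longrightarrow> ltimes_gen (Suc d) \<psi> \<xi>' k = (\<lambda>n. \<eta> k n - ltimes_gen d \<psi> \<delta> k n)"
    and "k \<ge> d"
  shows "ltimes_gen d \<psi> (\<lambda>a n. \<delta> a n + \<xi>' a n) k = \<eta> k"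
proof -
  have split: "ltimes_gen d \<psi> (\<lambda>a n. \<delta> a n + \<xi>' a n) k
      = (\<lambda>n. ltimes_gen d \<psi> \<delta> k n + ltimes_gen (Suc d) \<psi> \<xi>' k n)"
    using assms(1) by (simp add: ltimes_gen_add ltimes_gen_Suc)
  show ?thesis
  proof (cases "k = d")
    case True
    then show ?thesis
      unfolding split using assms(2) by (simp add: ltimes_gen_def[of "Suc d"])
  next
    case False
    then have "k \<ge> Suc d"
      using assms(4) by simp
    then show ?thesis
      unfolding split using assms(3) by simp
  qed
qed

lemma ltimes_gen_single:
  assumes "a0 \<in> {d..k}" "\<And>a. a \<in> {d..k} \<Longrightarrow> a \<noteq> a0 \<Longrightarrow> \<xi> a (n - 2 * int k) = 0"
  shows "ltimes_gen d \<psi> \<xi> k n = (\<Prod>b=k-a0+1..k. \<psi> b n) * \<xi> a0 (n - 2 * int k)"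
proof -
  have "ltimes_gen d \<psi> \<xi> k n = (\<Sum>a\<in>{d..k}. (\<Prod>b=k-a+1..k. \<psi> b n) * \<xi> a (n - 2 * int k))"
    using assms(1) unfolding ltimes_gen_def by auto
  also have "\<dots> = (\<Prod>b=k-a0+1..k. \<psi> b n) * \<xi> a0 (n - 2 * int k)"
    using assms by (subst sum.remove[of _ a0]) (auto intro!: sum.neutral)
  finally show ?thesis .
qed

text \<open>The operator is triangular: at level \<open>k\<close> and \<open>n \<ge> k\<close>, the term \<open>a = k\<close> has the
  coefficient \<open>\<psi>\<^sup>1(n) \<cdots> \<psi>\<^sup>k(n) \<noteq> 0\<close>.  This determines \<open>\<xi>\<^sup>k\<close> on \<open>[-k, \<infinity>)\<close>, which
  suffices when the values of \<open>\<xi>\<^sup>k\<close> there determine \<open>\<xi>\<^sup>k\<close>.\<close>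
lemma ltimes_gen_eq_0_imp_eq_0:
  fixes \<psi> \<zeta> :: "nat \<Rightarrow> int \<Rightarrow> 'b::idom"
  assumes kernel: "\<And>k n. k \<ge> d \<Longrightarrow> ltimes_gen d \<psi> \<zeta> k n = 0"
    and below: "\<And>k. k < d \<Longrightarrow> \<zeta> k = (\<lambda>n. 0)"
    and nonzero: "\<And>b n::nat. 1 \<le> b \<Longrightarrow> b \<le> n \<Longrightarrow> \<psi> b (int n) \<noteq> 0"
    and determined: "\<And>a. (\<And>m. m \<ge> - int a \<Longrightarrow> \<zeta> a m = 0) \<Longrightarrow> \<zeta> a = (\<lambda>n. 0)"
  shows "\<zeta> k = (\<lambda>n. 0)"
proof (induction k rule: less_induct)
  case (less k)
  show ?case
  proof (cases "k < d")
    case True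
    then show ?thesis by (rule below)
  next
    case False
    show ?thesis
    proof (rule determined)
      fix m assume "m \<ge> - int k"
      define n where "n = nat (m + 2 * int k)"
      have "n \<ge> k" "m = int n - 2 * int k"
        using \<open>m \<ge> - int k\<close> by (auto simp: n_def)
      have "ltimes_gen d \<psi> \<zeta> k (int n) = (\<Prod>b=1..k. \<psi> b (int n)) * \<zeta> k m"
        using False less.IH \<open>m = int n - 2 * int k\<close> by (subst ltimes_gen_single[of k]) auto
      moreover have "(\<Prod>b=1..k. \<psi> b (int n)) \<noteq> 0"
        using nonzero \<open>n \<ge> k\<close> by (simp add: prod_zero_iff)
      ultimately show "\<zeta> k m = 0"
        using kernel[of k "int n"] False by simp
    qed
  qed
qed

lemma fps_prod_nth_0: "(\<Prod>b\<in>S. f b) $ 0 = (\<Prod>b\<in>S. f b $ 0)"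
  by (induction S rule: infinite_finite_induct) auto

lemma ltimes_nth:
  "k \<ge> d \<Longrightarrow> ltimes d \<psi> \<xi> k n $ m = (\<Sum>a=d..k. ((\<Prod>b=k-a+1..k. \<psi> b n) * \<xi> a (n - 2 * int k)) $ m)"
  by (simp add: ltimes_def fps_sum_nth)

lemma ltimes_nth_0: "ltimes d \<psi> \<xi> k n $ 0 = ltimes_gen d (\<lambda>b n. \<psi> b n $ 0) (\<lambda>a n. \<xi> a n $ 0) k n"
  by (simp add: ltimes_def ltimes_gen_def fps_sum_nth fps_prod_nth_0)

lemma ltimes_gen_cong: "(\<And>b n. b \<ge> 1 \<Longrightarrow> \<psi> b n = \<psi>' b n) \<Longrightarrow> ltimes_gen d \<psi> \<xi> = ltimes_gen d \<psi>' \<xi>"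
  unfolding ltimes_gen_def by (auto intro!: ext sum.cong prod.cong)

section \<open>The classical equation\<close>

text \<open>Every colouring reduces to this one modulo \<open>h\<close>, by (C1).\<close>
definition classical_colouring :: "nat \<Rightarrow> int \<Rightarrow> 'a::comm_ring_1" where
  "classical_colouring b n = of_int (int b * (n - int b + 1))"

lemma colouring_relations_classical_colouring: "colouring_relations classical_colouring"
  by (simp add: colouring_relations_def classical_colouring_def algebra_simps)

lemma classical_colouring_nonzero:
  "1 \<le> b \<Longrightarrow> b \<le> n \<Longrightarrow> classical_colouring b (int n) \<noteq> (0::'a::{comm_ring_1,ring_char_0})"
  unfolding classical_colouring_def by (simp only: of_int_eq_0_iff) simp

lemma poly_fun_classical_colouring: "poly_fun 1 (classical_colouring b)"
proof -
  have "classical_colouring b = (\<lambda>n. of_int (int b) * (of_int n + of_int (1 - int b)) :: 'a)"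
    by (simp add: fun_eq_iff classical_colouring_def algebra_simps)
  moreover have "poly_fun (0 + 1) (\<lambda>n. of_int (int b) * (of_int n + of_int (1 - int b)) :: 'a)"
    by (intro poly_fun_mult poly_fun_const poly_fun_add poly_fun_of_int)
  ultimately show ?thesis by simp
qed

lemma colouring_nth_0: "colouring \<psi> \<Longrightarrow> k \<ge> 1 \<Longrightarrow> \<psi> k n $ 0 = classical_colouring k n"
  by (simp add: colouring_def classical_colouring_def)

lemma prod_classical_colouring:
  "(\<Prod>b=1..d. classical_colouring b n)
    = fact d * (\<Prod>j<d. of_int n - of_int (int j) :: 'a::{comm_ring_1,ring_char_0})"
proof (induction d)
  case (Suc d)
  have "classical_colouring (Suc d) n = (of_nat (Suc d) * (of_int n - of_int (int d)) :: 'a)"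
    by (simp add: classical_colouring_def algebra_simps)
  then have "(\<Prod>b=1..Suc d. classical_colouring b n)
      = (\<Prod>b=1..d. classical_colouring b n) * (of_nat (Suc d) * (of_int n - of_int (int d)) :: 'a)"
    by (simp add: prod.nat_ivl_Suc' mult.commute)
  with Suc show ?case
    by (simp only: fact_Suc prod.lessThan_Suc mult_ac)
qed simp

lemma verma_eq_0_if_degree_less:
  fixes \<eta> :: "nat \<Rightarrow> int \<Rightarrow> 'a::{idom,ring_char_0}"
  assumes "verma d \<eta>" "poly_fun D (\<eta> k)" "k \<ge> d" "D < d"
  shows "\<eta> k n = 0"
proof (rule poly_fun_eq_0_if_card_zeros[OF assms(2), of "{int k - int d..<int k}"])
  show "card {int k - int d..<int k} > D"
    using assms(4) by simp
  have zeros: "\<forall>m::nat. m + 1 \<le> k \<and> k \<le> m + d \<longrightarrow> \<eta> k (int m) = 0"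
    using assms(1,3) unfolding verma_def by blast
  fix m assume "m \<in> {int k - int d..<int k}"
  then have "m = int (nat m)" "nat m + 1 \<le> k \<and> k \<le> nat m + d"
    using assms(3) by auto
  then show "\<eta> k m = 0"
    using zeros by metis
qed simp

text \<open>The lowest level of a Verma-type \<open>\<eta>\<close> vanishes at \<open>0, \<dots>, d - 1\<close>, so it is divisible by
  the product of the \<open>\<psi>\<^sub>0\<^sup>b\<close>, \<open>b \<le> d\<close>.\<close>
lemma classical_leading_term:
  fixes \<eta> :: "nat \<Rightarrow> int \<Rightarrow> 'a::field_char_0"
  assumes "poly_fun D (\<eta> d)" "verma d \<eta>"
  obtains g where "poly_fun (D - d) g"
    "\<And>n. (\<Prod>b=1..d. classical_colouring b n) * g (n - 2 * int d) = \<eta> d n"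
proof -
  have "\<forall>k\<ge>d. \<forall>n::nat. n + 1 \<le> k \<and> k \<le> n + d \<longrightarrow> \<eta> k (int n) = 0"
    using assms(2) unfolding verma_def by (rule conjunct1)
  then have zeros: "\<eta> d (int j) = 0" if "j < d" for j
    using that by simp
  obtain q where q: "poly_fun (D - d) q" "\<And>n. \<eta> d n = (\<Prod>j<d. of_int n - of_int (int j)) * q n"
    using poly_fun_factor_zeros_below[OF assms(1) zeros] by blast
  define g where "g = (\<lambda>m. q (m + 2 * int d) / fact d)"
  have "g = (\<lambda>m. q (m + 2 * int d) * (1 / fact d))"
    by (simp add: g_def)
  moreover have "poly_fun (D - d + 0) (\<lambda>m. q (m + 2 * int d) * (1 / fact d))"
    by (rule poly_fun_mult[OF poly_fun_shift[OF q(1)] poly_fun_const])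
  ultimately have "poly_fun (D - d) g"
    by simp
  moreover have "(\<Prod>b=1..d. classical_colouring b n) * g (n - 2 * int d) = \<eta> d n" for n
    unfolding prod_classical_colouring g_def q(2) by simp
  ultimately show ?thesis by (rule that)
qed

definition finite_poly_seq :: "nat \<Rightarrow> nat \<Rightarrow> (nat \<Rightarrow> int \<Rightarrow> 'a::comm_ring_1) \<Rightarrow> bool" where
  "finite_poly_seq d D \<xi> \<longleftrightarrow>
     (\<forall>k<d. \<xi> k = (\<lambda>n. 0)) \<and> (\<forall>k. poly_fun D (\<xi> k)) \<and> (\<exists>K. \<forall>k\<ge>K. \<xi> k = (\<lambda>n. 0))"

lemma finite_poly_seq_add:
  assumes "finite_poly_seq d D \<xi>1" "finite_poly_seq d D \<xi>2"
  shows "finite_poly_seq d D (\<lambda>a n. \<xi>1 a n + \<xi>2 a n)"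
proof -
  obtain K1 K2 where K: "\<forall>k\<ge>K1. \<xi>1 k = (\<lambda>n. 0)" "\<forall>k\<ge>K2. \<xi>2 k = (\<lambda>n. 0)"
    using assms unfolding finite_poly_seq_def by blast
  show ?thesis
    unfolding finite_poly_seq_def
  proof (intro conjI allI impI exI)
    show "(\<lambda>n. \<xi>1 k n + \<xi>2 k n) = (\<lambda>n. 0)" if "k < d" for k
      using assms that by (simp add: finite_poly_seq_def)
    show "poly_fun D (\<lambda>n. \<xi>1 k n + \<xi>2 k n)" for k
      using assms by (simp add: finite_poly_seq_def poly_fun_add)
    show "(\<lambda>n. \<xi>1 k n + \<xi>2 k n) = (\<lambda>n. 0)" if "k \<ge> max K1 K2" for k
      using K that by simp
  qed
qed

lemma finite_poly_seq_Suc: "finite_poly_seq (Suc d) D \<xi> \<Longrightarrow> finite_poly_seq d D \<xi>"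
  unfolding finite_poly_seq_def by simp

lemma classical_leading_solution:
  fixes \<eta> :: "nat \<Rightarrow> int \<Rightarrow> 'a::field_char_0"
  assumes \<eta>: "\<And>k. k \<ge> d \<Longrightarrow> poly_fun D (\<eta> k)" "verma d \<eta>" and "d \<le> D"
  obtains \<delta> where "finite_poly_seq d D \<delta>"
    "\<And>k. k \<ge> d \<Longrightarrow> poly_fun D (ltimes_gen d classical_colouring \<delta> k)"
    "ltimes_gen d classical_colouring \<delta> d = \<eta> d"
proof -
  obtain g where g: "poly_fun (D - d) g"
    "\<And>n. (\<Prod>b=1..d. classical_colouring b n) * g (n - 2 * int d) = \<eta> d n"
    using classical_leading_term[OF \<eta>(1)[OF order_refl] \<eta>(2)] by blast
  define \<delta> where "\<delta> = (\<lambda>a. if a = d then g else (\<lambda>n. 0))"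
  have L: "ltimes_gen d classical_colouring \<delta> k
      = (\<lambda>n. (\<Prod>b=k-d+1..k. classical_colouring b n) * g (n + - 2 * int k))" if "k \<ge> d" for k
  proof
    fix n
    show "ltimes_gen d classical_colouring \<delta> k n
        = (\<Prod>b=k-d+1..k. classical_colouring b n) * g (n + - 2 * int k)"
      using that by (subst ltimes_gen_single[of d]) (auto simp: \<delta>_def)
  qed
  have "poly_fun D (\<delta> k)" for k
    using poly_fun_mono[OF g(1), of D] by (simp add: \<delta>_def poly_fun_const)
  then have "finite_poly_seq d D \<delta>"
    unfolding finite_poly_seq_def by (intro conjI allI exI[of _ "Suc d"]) (simp_all add: \<delta>_def)
  moreover have "poly_fun D (ltimes_gen d classical_colouring \<delta> k)" if "k \<ge> d" for k
  proof -
    have "poly_fun (card {k-d+1..k} * 1 + (D - d))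
        (\<lambda>n. (\<Prod>b=k-d+1..k. classical_colouring b n) * g (n + - 2 * int k))"
      by (rule poly_fun_mult[OF poly_fun_prod[OF _ poly_fun_classical_colouring] poly_fun_shift[OF g(1)]])
        simp
    moreover have "card {k-d+1..k} * 1 + (D - d) = D"
      using that \<open>d \<le> D\<close> by simp
    ultimately show ?thesis
      using L[OF that] by simp
  qed
  moreover have "ltimes_gen d classical_colouring \<delta> d = \<eta> d"
    using L[of d] g(2) by (simp add: fun_eq_iff)
  ultimately show ?thesis by (rule that)
qed

text \<open>Modulo \<open>h\<close> the equation \<open>\<psi> \<ltimes> \<xi> = \<eta>\<close> is solved level by level: the leading
  solution matches \<open>\<eta>\<close> at level \<open>d\<close>, and the remainder is of Verma type at level \<open>d + 1\<close>.
  The recursion stops once \<open>d\<close> exceeds the degree bound, where \<open>\<eta>\<close> vanishes.\<close>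
lemma classical_solution:
  fixes \<eta> :: "nat \<Rightarrow> int \<Rightarrow> 'a::field_char_0"
  assumes "\<And>k. k \<ge> d \<Longrightarrow> poly_fun D (\<eta> k)" "verma d \<eta>"
  shows "\<exists>\<xi>. finite_poly_seq d D \<xi> \<and> (\<forall>k\<ge>d. ltimes_gen d classical_colouring \<xi> k = \<eta> k)"
  using assms
proof (induction d arbitrary: \<eta> rule: measure_induct_rule[where f = "\<lambda>d. D + 1 - d"])
  case (less d)
  show ?case
  proof (cases "d \<le> D")
    case False
    then have "\<eta> k = (\<lambda>n. 0)" if "k \<ge> d" for k
      using verma_eq_0_if_degree_less[OF less.prems(2) less.prems(1)[OF that] that] by auto
    then show ?thesis
      by (intro exI[of _ "\<lambda>k n. 0"]) (auto simp: finite_poly_seq_def poly_fun_const ltimes_gen_def)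
  next
    case True
    obtain \<delta> where \<delta>: "finite_poly_seq d D \<delta>"
        "\<And>k. k \<ge> d \<Longrightarrow> poly_fun D (ltimes_gen d classical_colouring \<delta> k)"
        "ltimes_gen d classical_colouring \<delta> d = \<eta> d"
      using classical_leading_solution[OF less.prems True] by blast
    let ?L = "ltimes_gen d classical_colouring \<delta>"
    define \<zeta> where "\<zeta> = (\<lambda>k n. \<eta> k n - ?L k n)"
    have "verma d \<zeta>"
      unfolding \<zeta>_def
      by (intro verma_diff verma_ltimes_gen less.prems(2) colouring_relations_classical_colouring)
    moreover have "\<zeta> d = (\<lambda>n. 0)"
      using \<delta>(3) by (simp add: \<zeta>_def)
    ultimately have "verma (Suc d) \<zeta>"
      by (rule verma_Suc)
    moreover have "poly_fun D (\<zeta> k)" if "k \<ge> Suc d" for k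
      unfolding \<zeta>_def using that less.prems(1) \<delta>(2) by (intro poly_fun_diff) auto
    moreover have "D + 1 - Suc d < D + 1 - d"
      using True by simp
    ultimately obtain \<xi>' where \<xi>': "finite_poly_seq (Suc d) D \<xi>'"
        "\<forall>k\<ge>Suc d. ltimes_gen (Suc d) classical_colouring \<xi>' k = \<zeta> k"
      using less.IH[of "Suc d" \<zeta>] by blast
    have "\<xi>' d = (\<lambda>n. 0)"
      using \<xi>'(1) by (simp add: finite_poly_seq_def)
    then have "ltimes_gen d classical_colouring (\<lambda>a n. \<delta> a n + \<xi>' a n) k = \<eta> k" if "k \<ge> d" for k
      using \<delta>(3) \<xi>'(2) that by (intro ltimes_gen_extend_solution) (auto simp: \<zeta>_def)
    moreover have "finite_poly_seq d D (\<lambda>a n. \<delta> a n + \<xi>' a n)"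
      using \<delta>(1) finite_poly_seq_Suc[OF \<xi>'(1)] by (rule finite_poly_seq_add)
    ultimately show ?thesis by blast
  qed
qed

lemma colouring_ltimes_nth_0:
  assumes "colouring \<psi>"
  shows "ltimes d \<psi> \<xi> k n $ 0 = ltimes_gen d classical_colouring (\<lambda>a n. \<xi> a n $ 0) k n"
proof -
  have "ltimes_gen d (\<lambda>b n. \<psi> b n $ 0) (\<lambda>a n. \<xi> a n $ 0)
      = ltimes_gen d classical_colouring (\<lambda>a n. \<xi> a n $ 0)"
    by (rule ltimes_gen_cong) (simp add: colouring_nth_0[OF assms])
  then show ?thesis by (simp add: ltimes_nth_0)
qed

section \<open>Solving the equation over formal power series\<close>

definition regular_verma :: "nat \<Rightarrow> 'a::field_char_0 seq set" where
  "regular_verma d = {\<eta> \<in> Cseq d. regular_seq d \<eta> \<and> verma_type d \<eta>}"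

definition regular_summable :: "nat \<Rightarrow> 'a::field_char_0 seq set" where
  "regular_summable d = {\<xi> \<in> Cseq d. regular_seq d \<xi> \<and> summable_seq d \<xi>}"

lemma regular_seq_ltimes:
  fixes \<psi> \<xi> :: "'a::field_char_0 seq"
  assumes "regular_seq 1 \<psi>" "\<xi> \<in> regular_summable d"
  shows "regular_seq d (ltimes d \<psi> \<xi>)"
  unfolding regular_seq_iff_poly_fun
proof
  fix m
  obtain B where B: "\<forall>k\<ge>1. fps_poly_fun m B (\<psi> k)"
    using assms(1) unfolding regular_seq_iff_fps_poly_fun by blast
  obtain E where E: "\<forall>k\<ge>d. fps_poly_fun m E (\<xi> k)"
    using assms(2) unfolding regular_summable_def regular_seq_iff_fps_poly_fun by blast
  obtain K where K: "\<And>k n j. k \<ge> K \<Longrightarrow> j \<le> m \<Longrightarrow> \<xi> k n $ j = 0"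
    using assms(2) summable_seq_uniform unfolding regular_summable_def by blast
  have summand: "poly_fun (K * B + E) (\<lambda>n. ((\<Prod>b=k-a+1..k. \<psi> b n) * \<xi> a (n - 2 * int k)) $ m)"
    if "a \<in> {d..k}" for k a
  proof (cases "a < K")
    case True
    have "fps_poly_fun m (card {k-a+1..k} * B + E)
        (\<lambda>n. (\<Prod>b=k-a+1..k. \<psi> b n) * \<xi> a (n + - 2 * int k))"
      using B E that by (intro fps_poly_fun_mult[OF fps_poly_fun_prod fps_poly_fun_shift]) auto
    moreover have "card {k-a+1..k} * B + E \<le> K * B + E"
      using True that by simp
    ultimately have "fps_poly_fun m (K * B + E) (\<lambda>n. (\<Prod>b=k-a+1..k. \<psi> b n) * \<xi> a (n + - 2 * int k))"
      by (rule fps_poly_fun_mono)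
    then show ?thesis
      by (auto simp: fps_poly_fun_def)
  next
    case False
    then have "((\<Prod>b=k-a+1..k. \<psi> b n) * \<xi> a (n - 2 * int k)) $ m = 0" for n
      using K by (simp add: fps_mult_nth)
    then show ?thesis by (simp add: poly_fun_const)
  qed
  have "poly_fun (K * B + E) (\<lambda>n. ltimes d \<psi> \<xi> k n $ m)" if "k \<ge> d" for k
  proof -
    have "poly_fun (K * B + E) (\<lambda>n. \<Sum>a=d..k. ((\<Prod>b=k-a+1..k. \<psi> b n) * \<xi> a (n - 2 * int k)) $ m)"
      by (intro poly_fun_sum summand) auto
    then show ?thesis using that by (simp add: ltimes_nth)
  qed
  then show "\<exists>D. \<forall>k\<ge>d. poly_fun D (\<lambda>n. ltimes d \<psi> \<xi> k n $ m)" by blast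
qed

lemma ltimes_in_regular_verma:
  assumes "colouring \<psi>" "regular_seq 1 \<psi>" "\<xi> \<in> regular_summable d"
  shows "ltimes d \<psi> \<xi> \<in> regular_verma d"
proof -
  have "ltimes d \<psi> \<xi> \<in> Cseq d"
    by (simp add: Cseq_def ltimes_def)
  moreover have "verma_type d (ltimes d \<psi> \<xi>)"
    unfolding verma_type_iff_verma ltimes_eq_ltimes_gen
    by (intro verma_ltimes_gen colouring_relations_if_colouring assms(1))
  ultimately show ?thesis
    using regular_seq_ltimes[OF assms(2,3)] by (simp add: regular_verma_def)
qed

definition classical_solution_of :: "nat \<Rightarrow> 'a::field_char_0 seq \<Rightarrow> (nat \<Rightarrow> int \<Rightarrow> 'a) \<Rightarrow> bool" where
  "classical_solution_of d \<eta> \<xi> \<longleftrightarrow> (\<exists>D. finite_poly_seq d D \<xi>)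
     \<and> (\<forall>k\<ge>d. ltimes_gen d classical_colouring \<xi> k = (\<lambda>n. \<eta> k n $ 0))"

definition classical_part :: "nat \<Rightarrow> 'a::field_char_0 seq \<Rightarrow> nat \<Rightarrow> int \<Rightarrow> 'a" where
  "classical_part d \<eta> = (SOME \<xi>. classical_solution_of d \<eta> \<xi>)"

lemma classical_solution_of_classical_part:
  assumes "\<eta> \<in> regular_verma d"
  shows "classical_solution_of d \<eta> (classical_part d \<eta>)"
proof -
  obtain D where D: "\<forall>k\<ge>d. poly_fun D (\<lambda>n. \<eta> k n $ 0)"
    using assms unfolding regular_verma_def regular_seq_iff_poly_fun by blast
  have "verma d \<eta>"
    using assms by (simp add: regular_verma_def verma_type_iff_verma)
  then have "verma d (\<lambda>k n. \<eta> k n $ 0)"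
    by (intro verma_map[where F = "\<lambda>f. f $ 0"]) simp_all
  then obtain \<xi> where "finite_poly_seq d D \<xi>"
      "\<forall>k\<ge>d. ltimes_gen d classical_colouring \<xi> k = (\<lambda>n. \<eta> k n $ 0)"
    using classical_solution[of d D "\<lambda>k n. \<eta> k n $ 0"] D by blast
  then have "classical_solution_of d \<eta> \<xi>"
    unfolding classical_solution_of_def by blast
  then show ?thesis
    unfolding classical_part_def by (rule someI[of "classical_solution_of d \<eta>"])
qed

definition const_seq :: "(nat \<Rightarrow> int \<Rightarrow> 'a) \<Rightarrow> 'a::field_char_0 seq" where
  "const_seq \<xi> = (\<lambda>k n. fps_const (\<xi> k n))"

lemma const_seq_in_regular_summable:
  assumes "classical_solution_of d \<eta> \<xi>"
  shows "const_seq \<xi> \<in> regular_summable d"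
proof -
  obtain D K where D: "\<forall>k. poly_fun D (\<xi> k)" and K: "\<forall>k\<ge>K. \<xi> k = (\<lambda>n. 0)"
    using assms unfolding classical_solution_of_def finite_poly_seq_def by blast
  have "const_seq \<xi> \<in> Cseq d"
    using assms unfolding classical_solution_of_def finite_poly_seq_def Cseq_def const_seq_def by auto
  moreover have "regular_seq d (const_seq \<xi>)"
    unfolding regular_seq_iff_poly_fun
  proof
    fix m show "\<exists>D. \<forall>k\<ge>d. poly_fun D (\<lambda>n. const_seq \<xi> k n $ m)"
      using D by (cases m) (auto simp: const_seq_def poly_fun_const)
  qed
  moreover have "summable_seq d (const_seq \<xi>)"
    unfolding summable_seq_def
  proof
    fix m show "\<exists>K. \<forall>k\<ge>max d K. \<forall>n. const_seq \<xi> k n $ m = 0"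
      using K by (intro exI[of _ K]) (auto simp: const_seq_def)
  qed
  ultimately show ?thesis by (simp add: regular_summable_def)
qed

lemma ltimes_classical_part_nth_0:
  assumes "colouring \<psi>" "\<eta> \<in> regular_verma d"
  shows "ltimes d \<psi> (const_seq (classical_part d \<eta>)) k n $ 0 = \<eta> k n $ 0"
proof (cases "k < d")
  case True
  then have "\<eta> k = (\<lambda>n. 0)"
    using assms(2) unfolding regular_verma_def Cseq_def by blast
  then show ?thesis using True by (simp add: ltimes_def)
next
  case False
  then show ?thesis
    using classical_solution_of_classical_part[OF assms(2)]
    by (simp add: colouring_ltimes_nth_0[OF assms(1)] const_seq_def classical_solution_of_def)
qed

definition residual :: "'a::field_char_0 seq \<Rightarrow> nat \<Rightarrow> 'a seq \<Rightarrow> 'a seq" where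
  "residual \<psi> d \<eta> = (\<lambda>k n. fps_shift 1 (\<eta> k n - ltimes d \<psi> (const_seq (classical_part d \<eta>)) k n))"

lemma residual_in_regular_verma:
  assumes "colouring \<psi>" "regular_seq 1 \<psi>" "\<eta> \<in> regular_verma d"
  shows "residual \<psi> d \<eta> \<in> regular_verma d"
proof -
  have \<xi>: "const_seq (classical_part d \<eta>) \<in> regular_summable d"
    by (rule const_seq_in_regular_summable[OF classical_solution_of_classical_part[OF assms(3)]])
  have "\<eta> k = (\<lambda>n. 0)" if "k < d" for k
    using assms(3) that unfolding regular_verma_def Cseq_def by blast
  then have "residual \<psi> d \<eta> \<in> Cseq d"
    by (simp add: residual_def Cseq_def ltimes_def)
  moreover have "regular_seq d \<eta>"
    using assms(3) by (simp add: regular_verma_def)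
  then have "regular_seq d (residual \<psi> d \<eta>)"
    unfolding residual_def
    by (intro regular_seq_fps_shift regular_seq_diff regular_seq_ltimes[OF assms(2) \<xi>])
  moreover have "verma d \<eta>"
    using assms(3) by (simp add: regular_verma_def verma_type_iff_verma)
  then have "verma_type d (residual \<psi> d \<eta>)"
    unfolding residual_def verma_type_iff_verma ltimes_eq_ltimes_gen
    by (intro verma_map[where F = "fps_shift 1"] verma_diff verma_ltimes_gen
        colouring_relations_if_colouring assms(1)) simp_all
  ultimately show ?thesis by (simp add: regular_verma_def)
qed

lemma residual_nth:
  "\<eta> k n $ Suc j = residual \<psi> d \<eta> k n $ j + ltimes d \<psi> (const_seq (classical_part d \<eta>)) k n $ Suc j"
  by (simp add: residual_def)

lemma residual_iterate_in_regular_verma: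
  assumes "colouring \<psi>" "regular_seq 1 \<psi>" "\<eta> \<in> regular_verma d"
  shows "(residual \<psi> d ^^ i) \<eta> \<in> regular_verma d"
  by (induction i) (simp_all add: assms(3) residual_in_regular_verma[OF assms(1,2)])

lemma residual_iterate_expansion:
  assumes "colouring \<psi>" "regular_seq 1 \<psi>" "\<eta> \<in> regular_verma d"
  shows "(residual \<psi> d ^^ i) \<eta> k n $ j
    = (\<Sum>l=0..j. ltimes d \<psi> (const_seq (classical_part d ((residual \<psi> d ^^ (i + l)) \<eta>))) k n $ (j - l))"
proof (induction j arbitrary: i)
  case 0
  show ?case
    using ltimes_classical_part_nth_0[OF assms(1) residual_iterate_in_regular_verma[OF assms]] by simp
next
  case (Suc j)
  let ?L = "\<lambda>l. ltimes d \<psi> (const_seq (classical_part d ((residual \<psi> d ^^ l) \<eta>))) k n"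
  have "(residual \<psi> d ^^ i) \<eta> k n $ Suc j = (residual \<psi> d ^^ Suc i) \<eta> k n $ j + ?L i $ Suc j"
    using residual_nth[where \<eta> = "(residual \<psi> d ^^ i) \<eta>"] by simp
  also have "\<dots> = (\<Sum>l=0..j. ?L (Suc i + l) $ (j - l)) + ?L i $ Suc j"
    using Suc.IH[of "Suc i"] by simp
  also have "\<dots> = (\<Sum>l=0..Suc j. ?L (i + l) $ (Suc j - l))"
    by (subst sum.atLeast0_atMost_Suc_shift) simp
  finally show ?case .
qed

definition lifted_solution :: "'a::field_char_0 seq \<Rightarrow> nat \<Rightarrow> 'a seq \<Rightarrow> 'a seq" where
  "lifted_solution \<psi> d \<eta> = (\<lambda>k n. Abs_fps (\<lambda>m. classical_part d ((residual \<psi> d ^^ m) \<eta>) k n))"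

lemma lifted_solution_in_regular_summable:
  assumes "colouring \<psi>" "regular_seq 1 \<psi>" "\<eta> \<in> regular_verma d"
  shows "lifted_solution \<psi> d \<eta> \<in> regular_summable d"
proof -
  let ?x = "\<lambda>m. classical_part d ((residual \<psi> d ^^ m) \<eta>)"
  have sol: "classical_solution_of d ((residual \<psi> d ^^ m) \<eta>) (?x m)" for m
    by (rule classical_solution_of_classical_part[OF residual_iterate_in_regular_verma[OF assms]])
  have "lifted_solution \<psi> d \<eta> \<in> Cseq d"
    using sol unfolding Cseq_def lifted_solution_def classical_solution_of_def finite_poly_seq_def
    by (auto intro!: ext fps_ext)
  moreover have "regular_seq d (lifted_solution \<psi> d \<eta>)"
    unfolding regular_seq_iff_poly_fun
  proof
    fix m
    obtain D where "\<forall>k. poly_fun D (?x m k)"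
      using sol[of m] unfolding classical_solution_of_def finite_poly_seq_def by blast
    then show "\<exists>D. \<forall>k\<ge>d. poly_fun D (\<lambda>n. lifted_solution \<psi> d \<eta> k n $ m)"
      unfolding lifted_solution_def by auto
  qed
  moreover have "summable_seq d (lifted_solution \<psi> d \<eta>)"
    unfolding summable_seq_def
  proof
    fix m
    obtain K where "\<forall>k\<ge>K. ?x m k = (\<lambda>n. 0)"
      using sol[of m] unfolding classical_solution_of_def finite_poly_seq_def by blast
    then show "\<exists>K. \<forall>k\<ge>max d K. \<forall>n. lifted_solution \<psi> d \<eta> k n $ m = 0"
      unfolding lifted_solution_def by (intro exI[of _ K]) auto
  qed
  ultimately show ?thesis by (simp add: regular_summable_def)
qed

lemma ltimes_lifted_solution:
  assumes "colouring \<psi>" "regular_seq 1 \<psi>" "\<eta> \<in> regular_verma d"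
  shows "ltimes d \<psi> (lifted_solution \<psi> d \<eta>) = \<eta>"
proof (intro ext fps_ext)
  fix k n j
  let ?x = "\<lambda>m. classical_part d ((residual \<psi> d ^^ m) \<eta>)"
  let ?P = "\<lambda>a. \<Prod>b=k-a+1..k. \<psi> b n"
  show "ltimes d \<psi> (lifted_solution \<psi> d \<eta>) k n $ j = \<eta> k n $ j"
  proof (cases "k \<ge> d")
    case False
    then have "\<eta> k = (\<lambda>n. 0)"
      using assms(3) unfolding regular_verma_def Cseq_def by auto
    then show ?thesis using False by (simp add: ltimes_def)
  next
    case True
    have "ltimes d \<psi> (lifted_solution \<psi> d \<eta>) k n $ j
        = (\<Sum>a=d..k. \<Sum>i=0..j. ?P a $ i * ?x (j - i) a (n - 2 * int k))"
      using True by (simp add: ltimes_nth fps_mult_nth lifted_solution_def)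
    also have "\<dots> = (\<Sum>i=0..j. \<Sum>a=d..k. ?P a $ i * ?x (j - i) a (n - 2 * int k))"
      by (rule sum.swap)
    also have "\<dots> = (\<Sum>l=0..j. \<Sum>a=d..k. ?P a $ (j - l) * ?x l a (n - 2 * int k))"
      by (subst sum.atLeastAtMost_rev) (auto intro!: sum.cong)
    also have "\<dots> = (\<Sum>l=0..j. ltimes d \<psi> (const_seq (?x l)) k n $ (j - l))"
      using True by (simp add: ltimes_nth const_seq_def)
    also have "\<dots> = \<eta> k n $ j"
      using residual_iterate_expansion[OF assms, of 0 k n j] by simp
    finally show ?thesis .
  qed
qed

section \<open>Bijectivity and the converse\<close>

lemma fps_fun_eq_0_if_eventually_0:
  fixes f :: "int \<Rightarrow> 'a::{idom,ring_char_0} fps"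
  assumes "\<And>j. \<exists>D. poly_fun D (\<lambda>n. f n $ j)" "\<And>n. n \<ge> c \<Longrightarrow> f n = 0"
  shows "f = (\<lambda>n. 0)"
proof (intro ext fps_ext)
  fix n j
  obtain D where D: "poly_fun D (\<lambda>n. f n $ j)"
    using assms(1) by blast
  have "f n $ j = 0"
    by (rule poly_fun_eq_0_if_eventually_0[OF D, where c = c]) (simp add: assms(2))
  then show "f n $ j = (\<lambda>n. 0) n $ j"
    by simp
qed

lemma colouring_nonzero:
  assumes "colouring \<psi>" "1 \<le> b" "b \<le> n"
  shows "\<psi> b (int n) \<noteq> 0"
proof
  assume "\<psi> b (int n) = 0"
  then have "classical_colouring b (int n) = (0::'a)"
    using colouring_nth_0[OF assms(1,2)] by (metis fps_zero_nth)
  then show False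
    using classical_colouring_nonzero[OF assms(2,3)] by blast
qed

lemma inj_on_ltimes:
  fixes \<psi> :: "'a::field_char_0 seq"
  assumes "colouring \<psi>"
  shows "inj_on (ltimes d \<psi>) {\<xi> \<in> Cseq d. regular_seq d \<xi>}"
proof (rule inj_onI)
  fix \<xi>1 \<xi>2 assume \<xi>1: "\<xi>1 \<in> {\<xi> \<in> Cseq d. regular_seq d \<xi>}" and \<xi>2: "\<xi>2 \<in> {\<xi> \<in> Cseq d. regular_seq d \<xi>}"
    and eq: "ltimes d \<psi> \<xi>1 = ltimes d \<psi> \<xi>2"
  define \<zeta> where "\<zeta> = (\<lambda>k n. \<xi>1 k n - \<xi>2 k n)"
  have below: "\<zeta> k = (\<lambda>n. 0)" if "k < d" for k
    using \<xi>1 \<xi>2 that unfolding \<zeta>_def Cseq_def by auto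
  have "regular_seq d \<zeta>"
    using \<xi>1 \<xi>2 unfolding \<zeta>_def by (intro regular_seq_diff) auto
  have poly: "\<exists>D. poly_fun D (\<lambda>n. \<zeta> a n $ j)" for a j
  proof (cases "a < d")
    case True
    then show ?thesis
      using below[OF True] by (intro exI[of _ 0]) (simp add: poly_fun_const)
  next
    case False
    obtain D where "\<forall>k\<ge>d. poly_fun D (\<lambda>n. \<zeta> k n $ j)"
      using \<open>regular_seq d \<zeta>\<close> unfolding regular_seq_iff_poly_fun by blast
    then have "poly_fun D (\<lambda>n. \<zeta> a n $ j)"
      using False by simp
    then show ?thesis by blast
  qed
  have "\<zeta> k = (\<lambda>n. 0)" for k
  proof (rule ltimes_gen_eq_0_imp_eq_0[of d \<psi> \<zeta>])
    show "ltimes_gen d \<psi> \<zeta> k n = 0" for k n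
      using eq unfolding \<zeta>_def ltimes_gen_diff ltimes_eq_ltimes_gen by simp
    show "\<zeta> k = (\<lambda>n. 0)" if "k < d" for k
      using below that .
    show "\<psi> b (int n) \<noteq> 0" if "1 \<le> b" "b \<le> n" for b n
      using colouring_nonzero[OF assms that] .
    show "\<zeta> a = (\<lambda>n. 0)" if "\<And>m. m \<ge> - int a \<Longrightarrow> \<zeta> a m = 0" for a
      using poly that by (rule fps_fun_eq_0_if_eventually_0)
  qed
  then show "\<xi>1 = \<xi>2"
    unfolding \<zeta>_def by (simp add: fun_eq_iff)
qed

lemma bij_betw_ltimes:
  assumes "colouring \<psi>" "regular_seq 1 \<psi>"
  shows "bij_betw (ltimes d \<psi>) (regular_summable d) (regular_verma d)"
  unfolding bij_betw_def
proof (intro conjI subset_antisym subsetI)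
  show "inj_on (ltimes d \<psi>) (regular_summable d)"
    using inj_on_ltimes[OF assms(1)] by (rule inj_on_subset) (auto simp: regular_summable_def)
  show "\<eta> \<in> regular_verma d" if "\<eta> \<in> ltimes d \<psi> ` regular_summable d" for \<eta>
    using that ltimes_in_regular_verma[OF assms] by blast
  show "\<eta> \<in> ltimes d \<psi> ` regular_summable d" if "\<eta> \<in> regular_verma d" for \<eta>
    using lifted_solution_in_regular_summable[OF assms that] ltimes_lifted_solution[OF assms that]
    by (metis image_eqI)
qed

lemma shift1_in_regular_verma:
  assumes "colouring \<psi>" "regular_seq 1 \<psi>"
  shows "shift1 \<psi> \<in> regular_verma 0"
proof -
  have "regular_seq 0 (shift1 \<psi>)"
    using assms(2) unfolding regular_seq_def shift1_def by (meson le_add2)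
  moreover have "\<psi> (n + k + 1 + 1) (int n) = \<psi> (k + 1) (- int n - 2)" for n k
    using assms(1) unfolding colouring_def by (metis add.assoc le_add2)
  then have "verma_type 0 (shift1 \<psi>)"
    unfolding verma_type_def shift1_def by auto
  ultimately show ?thesis
    by (simp add: regular_verma_def Cseq_def)
qed

lemma classical_solution_unique:
  fixes \<xi>1 \<xi>2 :: "nat \<Rightarrow> int \<Rightarrow> 'a::field_char_0"
  assumes "\<And>a. \<exists>D. poly_fun D (\<xi>1 a)" "\<And>a. \<exists>D. poly_fun D (\<xi>2 a)"
    and "\<And>k. k < d \<Longrightarrow> \<xi>1 k = \<xi>2 k"
    and "\<And>k. k \<ge> d \<Longrightarrow> ltimes_gen d classical_colouring \<xi>1 k = ltimes_gen d classical_colouring \<xi>2 k"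
  shows "\<xi>1 = \<xi>2"
proof -
  define \<zeta> where "\<zeta> = (\<lambda>a m. \<xi>1 a m - \<xi>2 a m)"
  have "\<zeta> a = (\<lambda>n. 0)" for a
  proof (rule ltimes_gen_eq_0_imp_eq_0[of d classical_colouring \<zeta>])
    show "ltimes_gen d classical_colouring \<zeta> k n = 0" if "k \<ge> d" for k n
      unfolding \<zeta>_def ltimes_gen_diff using assms(4)[OF that] by simp
    show "\<zeta> k = (\<lambda>n. 0)" if "k < d" for k
      using assms(3)[OF that] by (simp add: \<zeta>_def)
    show "classical_colouring b (int n) \<noteq> (0::'a)" if "1 \<le> b" "b \<le> n" for b n
      using classical_colouring_nonzero[OF that] .
    show "\<zeta> a = (\<lambda>n. 0)" if "\<And>m. m \<ge> - int a \<Longrightarrow> \<zeta> a m = 0" for a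
    proof -
      obtain D1 D2 where "poly_fun D1 (\<xi>1 a)" "poly_fun D2 (\<xi>2 a)"
        using assms(1,2) by blast
      then have "poly_fun (max D1 D2) (\<zeta> a)"
        unfolding \<zeta>_def by (intro poly_fun_diff) (auto elim: poly_fun_mono)
      then show ?thesis
        using that by (auto intro: poly_fun_eq_0_if_eventually_0)
    qed
  qed
  then show ?thesis
    by (simp add: \<zeta>_def fun_eq_iff)
qed

lemma classical_shift_solution:
  "ltimes_gen 0 classical_colouring (\<lambda>a m. if a = 0 then of_int m else if a = 1 then 1 else 0) k n
    = (classical_colouring (k + 1) n :: 'a::comm_ring_1)"
proof (cases "k = 0")
  case True
  then show ?thesis by (simp add: ltimes_gen_def classical_colouring_def)
next
  case False
  let ?t = "\<lambda>a. (\<Prod>b=k-a+1..k. classical_colouring b n)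
    * (if a = 0 then of_int (n - 2 * int k) else if a = 1 then 1 else 0 :: 'a)"
  have "ltimes_gen 0 classical_colouring (\<lambda>a m. if a = 0 then of_int m else if a = 1 then 1 else 0) k n
      = (\<Sum>a\<in>{0..k}. ?t a)"
    by (simp add: ltimes_gen_def)
  also have "\<dots> = (\<Sum>a\<in>{0, 1}. ?t a)"
    using False by (intro sum.mono_neutral_right) auto
  also have "\<dots> = of_int (n - 2 * int k) + classical_colouring k n"
    using False by simp
  also have "\<dots> = classical_colouring (k + 1) n"
    by (simp add: classical_colouring_def algebra_simps)
  finally show ?thesis .
qed

lemma solution_nth_0:
  fixes \<psi> \<xi> :: "'a::field_char_0 seq"
  assumes col: "colouring \<psi>" and reg: "regular_seq 0 \<xi>" and eq: "ltimes 0 \<psi> \<xi> = shift1 \<psi>"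
  shows "\<xi> a m $ 0 = (if a = 0 then of_int m else if a = 1 then 1 else 0)"
proof -
  let ?\<sigma> = "\<lambda>a m. if a = 0 then of_int m else if a = 1 then 1 else (0::'a)"
  have "(\<lambda>a m. \<xi> a m $ 0) = ?\<sigma>"
  proof (rule classical_solution_unique[where d = 0])
    show "\<exists>D. poly_fun D (\<lambda>m. \<xi> a m $ 0)" for a
      using reg unfolding regular_seq_iff_poly_fun by blast
    show "\<exists>D. poly_fun D (?\<sigma> a)" for a
      using poly_fun_of_int poly_fun_const by (cases "a = 0"; cases "a = 1") auto
    show "ltimes_gen 0 classical_colouring (\<lambda>a m. \<xi> a m $ 0) k = ltimes_gen 0 classical_colouring ?\<sigma> k" for k
      using colouring_ltimes_nth_0[OF col, of 0 \<xi> k] colouring_nth_0[OF col, of "k + 1"] eq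
      by (simp add: fun_eq_iff shift1_def classical_shift_solution)
  qed simp
  then show ?thesis
    by (simp add: fun_eq_iff)
qed

text \<open>Since \<open>\<xi>\<^sup>a \<equiv> [a = 1]\<close> modulo \<open>h\<close> for \<open>a \<ge> 1\<close>, only the term \<open>a = 1\<close> involves
  \<open>\<psi>\<^sup>k\<close> at order \<open>m + 1\<close>.\<close>
lemma solution_term_poly_fun:
  fixes \<psi> \<xi> :: "'a::field_char_0 seq"
  assumes col: "colouring \<psi>" and reg: "regular_seq 0 \<xi>" and eq: "ltimes 0 \<psi> \<xi> = shift1 \<psi>"
    and B: "\<And>b. b \<ge> 1 \<Longrightarrow> fps_poly_fun m B (\<psi> b)" and E: "fps_poly_fun (Suc m) E (\<xi> a)"
    and a: "1 \<le> a" "a \<le> k"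
  shows "poly_fun (a * B + E) (\<lambda>n. ((\<Prod>b=k-a+1..k. \<psi> b n) * \<xi> a (n - 2 * int k)) $ Suc m
      - (if a = 1 then \<psi> k n $ Suc m else 0))"
proof -
  have "fps_poly_fun m (card {k-a+1..k} * B) (\<lambda>n. \<Prod>b=k-a+1..k. \<psi> b n)"
    by (rule fps_poly_fun_prod) (auto intro: B)
  then have P: "fps_poly_fun m (a * B) (\<lambda>n. \<Prod>b=k-a+1..k. \<psi> b n)"
    using a by simp
  have "poly_fun (a * B + E) (\<lambda>n. ((\<Prod>b=k-a+1..k. \<psi> b n) * \<xi> a (n + - 2 * int k)) $ Suc m
      - (\<Prod>b=k-a+1..k. \<psi> b n) $ Suc m * \<xi> a (n + - 2 * int k) $ 0)"
    by (rule poly_fun_mult_nth_Suc[OF P fps_poly_fun_shift[OF E]])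
  moreover have "(\<Prod>b=k-a+1..k. \<psi> b n) $ Suc m * \<xi> a (n + - 2 * int k) $ 0
      = (if a = 1 then \<psi> k n $ Suc m else 0)" for n
    using a by (simp add: solution_nth_0[OF col reg eq])
  ultimately show ?thesis by simp
qed

lemma solution_coeff_diff_poly_fun:
  fixes \<psi> \<xi> :: "'a::field_char_0 seq"
  assumes col: "colouring \<psi>" and reg: "regular_seq 0 \<xi>" and eq: "ltimes 0 \<psi> \<xi> = shift1 \<psi>"
    and B: "\<And>b. b \<ge> 1 \<Longrightarrow> fps_poly_fun m B (\<psi> b)" and E: "\<And>a. fps_poly_fun (Suc m) E (\<xi> a)"
    and K: "\<And>a n j. a \<ge> K \<Longrightarrow> j \<le> Suc m \<Longrightarrow> \<xi> a n $ j = 0" "K \<ge> 2"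
    and k: "k \<ge> 1"
  shows "poly_fun (K * B + E) (\<lambda>n. \<psi> (Suc k) n $ Suc m - \<psi> k n $ Suc m)"
proof -
  let ?T = "\<lambda>a n. ((\<Prod>b=k-a+1..k. \<psi> b n) * \<xi> a (n - 2 * int k)) $ Suc m
      - (if a = 1 then \<psi> k n $ Suc m else 0)"
  have sum_eq: "\<psi> (Suc k) n $ Suc m - \<psi> k n $ Suc m = (\<Sum>a=0..k. ?T a n)" for n
  proof -
    have "\<psi> (Suc k) n $ Suc m = ltimes 0 \<psi> \<xi> k n $ Suc m"
      using eq by (simp add: shift1_def)
    then show ?thesis
      using k by (simp add: ltimes_nth sum_subtractf sum.delta)
  qed
  have summand: "poly_fun (K * B + E) (?T a)" if "a \<in> {0..k}" for a
  proof -
    consider "a = 0" | "1 \<le> a" "a < K" | "a \<ge> K" by linarith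
    then show ?thesis
    proof cases
      case 1
      have "poly_fun E (\<lambda>n. \<xi> 0 (n + - 2 * int k) $ Suc m)"
        using poly_fun_shift E unfolding fps_poly_fun_def by blast
      then show ?thesis
        using 1 by (simp add: poly_fun_mono)
    next
      case 2
      then have "poly_fun (a * B + E) (?T a)"
        using that by (intro solution_term_poly_fun[OF col reg eq B E]) auto
      moreover have "a * B + E \<le> K * B + E"
        using 2 by simp
      ultimately show ?thesis by (rule poly_fun_mono)
    next
      case 3
      then have "?T a n = 0" for n
        using K by (simp add: fps_mult_nth)
      then show ?thesis by (simp add: poly_fun_const)
    qed
  qed
  have "poly_fun (K * B + E) (\<lambda>n. \<Sum>a=0..k. ?T a n)"
    by (intro poly_fun_sum summand) auto
  then show ?thesis
    by (simp only: sum_eq)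
qed

lemma poly_fun_telescope:
  assumes "poly_fun F (f 1)" "\<And>k. k \<ge> 1 \<Longrightarrow> poly_fun F (\<lambda>n. f (Suc k) n - f k n)" "k \<ge> 1"
  shows "poly_fun F (f k)"
  using assms(3)
proof (induction k rule: dec_induct)
  case (step k)
  then have "poly_fun F (\<lambda>n. f k n + (f (Suc k) n - f k n))"
    using assms(2) by (intro poly_fun_add)
  then show ?case by simp
qed (use assms(1) in simp)

lemma regular_colouring_if_solution:
  fixes \<psi> \<xi> :: "'a::field_char_0 seq"
  assumes col: "colouring \<psi>" and \<xi>: "\<xi> \<in> regular_summable 0" and eq: "ltimes 0 \<psi> \<xi> = shift1 \<psi>"
  shows "regular_seq 1 \<psi>"
  unfolding regular_seq_iff_fps_poly_fun
proof
  have reg: "regular_seq 0 \<xi>"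
    using \<xi> by (simp add: regular_summable_def)
  fix m show "\<exists>B. \<forall>k\<ge>1. fps_poly_fun m B (\<psi> k)"
  proof (induction m)
    case 0
    have "poly_fun 1 (\<lambda>n. \<psi> k n $ 0)" if "k \<ge> 1" for k
      using poly_fun_classical_colouring colouring_nth_0[OF col that] by simp
    then show ?case by (auto simp: fps_poly_fun_def)
  next
    case (Suc m)
    obtain B where B: "\<And>b. b \<ge> 1 \<Longrightarrow> fps_poly_fun m B (\<psi> b)"
      using Suc.IH by blast
    obtain E where "\<forall>a\<ge>0. fps_poly_fun (Suc m) E (\<xi> a)"
      using reg unfolding regular_seq_iff_fps_poly_fun by blast
    then have E: "\<And>a. fps_poly_fun (Suc m) E (\<xi> a)"
      by simp
    obtain K0 where K0: "\<And>a n j. a \<ge> K0 \<Longrightarrow> j \<le> Suc m \<Longrightarrow> \<xi> a n $ j = 0"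
      using summable_seq_uniform[where m = "Suc m"] \<xi> unfolding regular_summable_def by blast
    define K where "K = max K0 2"
    have K: "\<And>a n j. a \<ge> K \<Longrightarrow> j \<le> Suc m \<Longrightarrow> \<xi> a n $ j = 0" "K \<ge> 2"
      using K0 by (auto simp: K_def)
    have level_1: "poly_fun (K * B + E) (\<lambda>n. \<psi> 1 n $ Suc m)"
    proof -
      have "\<psi> 1 n $ Suc m = \<xi> 0 n $ Suc m" for n
        using fun_cong[OF fun_cong[OF eq, of 0], of n] by (simp add: ltimes_def shift1_def)
      moreover have "poly_fun E (\<lambda>n. \<xi> 0 n $ Suc m)"
        using E[of 0] unfolding fps_poly_fun_def by blast
      ultimately show ?thesis
        using poly_fun_mono[of E _ "K * B + E"] by simp
    qed
    have top: "poly_fun (K * B + E) (\<lambda>n. \<psi> k n $ Suc m)" if "k \<ge> 1" for k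
      by (rule poly_fun_telescope[where f = "\<lambda>k n. \<psi> k n $ Suc m",
            OF level_1 solution_coeff_diff_poly_fun[OF col reg eq B E K] that])
    have "fps_poly_fun (Suc m) (max B (K * B + E)) (\<psi> k)" if "k \<ge> 1" for k
      by (rule fps_poly_fun_Suc[OF B[OF that] top[OF that]])
    then show ?case by blast
  qed
qed

theorem mainTheorem6:
  fixes \<psi> :: "'a::field_char_0 seq"
  assumes "colouring \<psi>"
  shows "((\<exists>\<xi>\<in>Cseq 0. regular_seq 0 \<xi> \<and> summable_seq 0 \<xi> \<and> ltimes 0 \<psi> \<xi> = shift1 \<psi>)
            \<longleftrightarrow> regular_seq 1 \<psi>)
       \<and> (regular_seq 1 \<psi> \<longrightarrow> (\<forall>d::nat.
            (\<forall>c \<xi>1 \<xi>2. \<xi>1 \<in> Cseq d \<longrightarrow> \<xi>2 \<in> Cseq d \<longrightarrow>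
                ltimes d \<psi> (\<lambda>k n. c * \<xi>1 k n + \<xi>2 k n)
                  = (\<lambda>k n. c * ltimes d \<psi> \<xi>1 k n + ltimes d \<psi> \<xi>2 k n))
          \<and> bij_betw (ltimes d \<psi>)
              {\<xi>\<in>Cseq d. regular_seq d \<xi> \<and> summable_seq d \<xi>}
              {\<eta>\<in>Cseq d. regular_seq d \<eta> \<and> verma_type d \<eta>}))"
proof (intro conjI impI allI iffI)
  assume "\<exists>\<xi>\<in>Cseq 0. regular_seq 0 \<xi> \<and> summable_seq 0 \<xi> \<and> ltimes 0 \<psi> \<xi> = shift1 \<psi>"
  then show "regular_seq 1 \<psi>"
    using regular_colouring_if_solution[OF assms] by (auto simp: regular_summable_def)
next
  assume reg: "regular_seq 1 \<psi>"
  note \<eta> = shift1_in_regular_verma[OF assms reg]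
  show "\<exists>\<xi>\<in>Cseq 0. regular_seq 0 \<xi> \<and> summable_seq 0 \<xi> \<and> ltimes 0 \<psi> \<xi> = shift1 \<psi>"
    using lifted_solution_in_regular_summable[OF assms reg \<eta>] ltimes_lifted_solution[OF assms reg \<eta>]
    by (auto simp: regular_summable_def)
next
  fix d c \<xi>1 \<xi>2
  show "ltimes d \<psi> (\<lambda>k n. c * \<xi>1 k n + \<xi>2 k n) = (\<lambda>k n. c * ltimes d \<psi> \<xi>1 k n + ltimes d \<psi> \<xi>2 k n)"
    by (simp add: ltimes_eq_ltimes_gen ltimes_gen_linear)
next
  fix d
  assume "regular_seq 1 \<psi>"
  then show "bij_betw (ltimes d \<psi>) {\<xi>\<in>Cseq d. regular_seq d \<xi> \<and> summable_seq d \<xi>}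
      {\<eta>\<in>Cseq d. regular_seq d \<eta> \<and> verma_type d \<eta>}"
    using bij_betw_ltimes[OF assms] by (simp add: regular_summable_def regular_verma_def)
qed

end
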